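(* Let $\mathbf A \in \mathbb{H}^{M\times K}$, $\mathbf B \in \mathbb{H}^{K\times L}$ and $\mathbf C \in \mathbb{H}^{L\times N}$. Then $$\begin{aligned} \operatorname{vec}\big(\mathbf A \cdot_{\mathrm L} [\mathbf B \cdot_{\mathrm R} \mathbf C]\big) &= (\mathbf C^{\mathrm T} \otimes_{\mathrm R} \mathbf A)\cdot_{\mathrm L} \operatorname{vec}(\mathbf B),\\ \operatorname{vec}\big(\mathbf A \cdot_{\mathrm R} [\mathbf B \cdot_{\mathrm L} \mathbf C]\big) &= (\mathbf C^{\mathrm T} \otimes_{\mathrm L} \mathbf A)\cdot_{\mathrm R} \operatorname{vec}(\mathbf B),\\ \operatorname{vec}\big([\mathbf A \cdot_{\mathrm L} \mathbf B] \cdot_{\mathrm R} \mathbf C\big) &= (\mathbf C^{\mathrm T} \otimes_{\mathrm L} \mathbf A)\cdot_{\mathrm L} \operatorname{vec}(\mathbf B),\\ \operatorname{vec}\big([\mathbf A \cdot_{\mathrm R} \mathbf B] \cdot_{\mathrm L} \mathbf C\big) &= (\mathbf C^{\mathrm T} \otimes_{\mathrm R} \mathbf A)\cdot_{\mathrm R} \operatorname{vec}(\mathbf B). \end{aligned}$$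
   Context: $\mathbb{H}$ denotes the skew field of real quaternions and $^{\mathrm T}$ the (non-conjugating) transpose. For quaternion matrices, the left matrix product is $[\mathbf X \cdot_{\mathrm L} \mathbf Y]_{m,n} = \sum_{k} [\mathbf X]_{m,k}[\mathbf Y]_{k,n}$ and the right matrix product is $[\mathbf X \cdot_{\mathrm R} \mathbf Y]_{m,n} = \sum_{k} [\mathbf Y]_{k,n}[\mathbf X]_{m,k}$ (vectors are treated as one-column matrices). For $\mathbf X\in\mathbb{H}^{P\times Q}$, $\operatorname{vec}(\mathbf X)\in\mathbb{H}^{PQ\times 1}$ is the column-stacking vectorization, $[\operatorname{vec}(\mathbf X)]_{p+(q-1)P} = [\mathbf X]_{p,q}$. The left Kronecker product $\mathbf X \otimes_{\mathrm L} \mathbf Y$ is the block matrix whose $(i,j)$ block is $[\mathbf X]_{i,j}\,\mathbf Y$ (entries of $\mathbf Y$ multiplied on the left by $[\mathbf X]_{i,j}$); the right Kronecker product $\mathbf X \otimes_{\mathrm R} \mathbf Y$ is the block matrix whose $(i,j)$ block is $\mathbf Y\,[\mathbf X]_{i,j}$ (entries of $\mathbf Y$ multiplied on the right by $[\mathbf X]_{i,j}$). *)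

theory Defs
  imports Main "HOL.Real"
begin

datatype quat = Quat (qRe: real) (qI: real) (qJ: real) (qK: real)

lemma quat_eqI: "qRe x = qRe y \<Longrightarrow> qI x = qI y \<Longrightarrow> qJ x = qJ y \<Longrightarrow> qK x = qK y \<Longrightarrow> x = y"
  by (cases x; cases y) simp

instantiation quat :: ring_1
begin
definition "0 = Quat 0 0 0 0"
definition "1 = Quat 1 0 0 0"
definition "x + y = Quat (qRe x + qRe y) (qI x + qI y) (qJ x + qJ y) (qK x + qK y)"
definition "x - y = Quat (qRe x - qRe y) (qI x - qI y) (qJ x - qJ y) (qK x - qK y)"
definition "- x = Quat (- qRe x) (- qI x) (- qJ x) (- qK x)"
text \<open>Hamilton product: i*i = j*j = k*k = i*j*k = -1\<close>
definition "x * y = Quat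
   (qRe x * qRe y - qI x * qI y - qJ x * qJ y - qK x * qK y)
   (qRe x * qI y + qI x * qRe y + qJ x * qK y - qK x * qJ y)
   (qRe x * qJ y - qI x * qK y + qJ x * qRe y + qK x * qI y)
   (qRe x * qK y + qI x * qJ y - qJ x * qI y + qK x * qRe y)"
instance
  by standard (auto intro!: quat_eqI simp: zero_quat_def one_quat_def plus_quat_def
      minus_quat_def uminus_quat_def times_quat_def algebra_simps)
end

type_synonym qmat = "nat \<Rightarrow> nat \<Rightarrow> quat"

definition lmult :: "nat \<Rightarrow> qmat \<Rightarrow> qmat \<Rightarrow> qmat" where
  "lmult K X Y = (\<lambda>m n. \<Sum>k<K. X m k * Y k n)"

definition rmult :: "nat \<Rightarrow> qmat \<Rightarrow> qmat \<Rightarrow> qmat" where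
  "rmult K X Y = (\<lambda>m n. \<Sum>k<K. Y k n * X m k)"

definition qtrans :: "qmat \<Rightarrow> qmat" where
  "qtrans X = (\<lambda>i j. X j i)"

text \<open>Column-stacking vectorization of a matrix with P rows, as a one-column matrix:
  [vec X]_{p + q P} = X_{p,q} (0-based).\<close>
definition qvec :: "nat \<Rightarrow> qmat \<Rightarrow> qmat" where
  "qvec P X = (\<lambda>i j. X (i mod P) (i div P))"

text \<open>Left Kronecker product, Y of size R x S: block (i,j) is X_{i,j} Y.\<close>
definition kronL :: "nat \<Rightarrow> nat \<Rightarrow> qmat \<Rightarrow> qmat \<Rightarrow> qmat" where
  "kronL R S X Y = (\<lambda>a b. X (a div R) (b div S) * Y (a mod R) (b mod S))"

text \<open>Right Kronecker product, Y of size R x S: block (i,j) is Y X_{i,j}.\<close>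
definition kronR :: "nat \<Rightarrow> nat \<Rightarrow> qmat \<Rightarrow> qmat \<Rightarrow> qmat" where
  "kronR R S X Y = (\<lambda>a b. Y (a mod R) (b mod S) * X (a div R) (b div S))"

end

theory Submission
  imports Defs
begin

text \<open>Every entry on either side is a double sum over (k, l) of products of A_{m,k}, B_{k,l} and
  C_{l,n}; column-stacking turns the single index of vec B into the pair (k mod K, k div K).
  Both sides multiply the three factors in the same order, so only associativity of the
  quaternion product is needed, never commutativity: that is what fixes which Kronecker product
  pairs with which matrix product.\<close>

lemma sum_lessThan_mult_mod_div:
  fixes f :: "nat \<Rightarrow> nat \<Rightarrow> 'a::comm_monoid_add"
  shows "(\<Sum>j<L * K. f (j mod K) (j div K)) = (\<Sum>l<L. \<Sum>k<K. f k l)"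
proof -
  have "(\<Sum>j<L * K. f (j mod K) (j div K)) = (\<Sum>(l, k)\<in>{..<L} \<times> {..<K}. f k l)"
  proof (rule sum.reindex_bij_witness[where i = "\<lambda>(l, k). k + l * K" and j = "\<lambda>j. (j div K, j mod K)"])
    show "\<And>j. j \<in> {..<L * K} \<Longrightarrow> (j div K, j mod K) \<in> {..<L} \<times> {..<K}"
      by (cases "K = 0") (auto simp: less_mult_imp_div_less)
    show "(case lk of (l, k) \<Rightarrow> k + l * K) \<in> {..<L * K}" if lk: "lk \<in> {..<L} \<times> {..<K}" for lk
    proof -
      obtain l k where "lk = (l, k)" "l < L" "k < K" using lk by blast
      then have "k + l * K < Suc l * K" by simp
      also have "\<dots> \<le> L * K" using \<open>l < L\<close> by (intro mult_le_mono1) simp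
      finally have "k + l * K < L * K" .
      then show ?thesis using \<open>lk = (l, k)\<close> by simp
    qed
  qed auto
  also have "\<dots> = (\<Sum>l<L. \<Sum>k<K. f k l)"
    by (rule sum.cartesian_product[symmetric])
  finally show ?thesis .
qed

lemma qvec_lmult_rmult_right:
  "qvec M (lmult K A (rmult L B C)) i j = lmult (L * K) (kronR M K (qtrans C) A) (qvec K B) i j"
proof -
  have "qvec M (lmult K A (rmult L B C)) i j = (\<Sum>k<K. \<Sum>l<L. A (i mod M) k * (C l (i div M) * B k l))"
    by (simp add: qvec_def lmult_def rmult_def sum_distrib_left)
  also have "\<dots> = (\<Sum>l<L. \<Sum>k<K. A (i mod M) k * C l (i div M) * B k l)"
    by (subst sum.swap) (simp add: mult.assoc)
  also have "\<dots> = lmult (L * K) (kronR M K (qtrans C) A) (qvec K B) i j"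
    by (simp add: lmult_def kronR_def qtrans_def qvec_def sum_lessThan_mult_mod_div[symmetric])
  finally show ?thesis .
qed

lemma qvec_rmult_lmult_right:
  "qvec M (rmult K A (lmult L B C)) i j = rmult (L * K) (kronL M K (qtrans C) A) (qvec K B) i j"
proof -
  have "qvec M (rmult K A (lmult L B C)) i j = (\<Sum>k<K. \<Sum>l<L. B k l * C l (i div M) * A (i mod M) k)"
    by (simp add: qvec_def lmult_def rmult_def sum_distrib_right)
  also have "\<dots> = (\<Sum>l<L. \<Sum>k<K. B k l * (C l (i div M) * A (i mod M) k))"
    by (subst sum.swap) (simp add: mult.assoc)
  also have "\<dots> = rmult (L * K) (kronL M K (qtrans C) A) (qvec K B) i j"
    by (simp add: rmult_def kronL_def qtrans_def qvec_def sum_lessThan_mult_mod_div[symmetric])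
  finally show ?thesis .
qed

lemma qvec_rmult_lmult_left:
  "qvec M (rmult L (lmult K A B) C) i j = lmult (L * K) (kronL M K (qtrans C) A) (qvec K B) i j"
proof -
  have "qvec M (rmult L (lmult K A B) C) i j = (\<Sum>l<L. \<Sum>k<K. C l (i div M) * (A (i mod M) k * B k l))"
    by (simp add: qvec_def lmult_def rmult_def sum_distrib_left)
  also have "\<dots> = lmult (L * K) (kronL M K (qtrans C) A) (qvec K B) i j"
    by (simp add: lmult_def kronL_def qtrans_def qvec_def sum_lessThan_mult_mod_div[symmetric] mult.assoc)
  finally show ?thesis .
qed

lemma qvec_lmult_rmult_left:
  "qvec M (lmult L (rmult K A B) C) i j = rmult (L * K) (kronR M K (qtrans C) A) (qvec K B) i j"
proof -
  have "qvec M (lmult L (rmult K A B) C) i j = (\<Sum>l<L. \<Sum>k<K. B k l * A (i mod M) k * C l (i div M))"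
    by (simp add: qvec_def lmult_def rmult_def sum_distrib_right)
  also have "\<dots> = rmult (L * K) (kronR M K (qtrans C) A) (qvec K B) i j"
    by (simp add: rmult_def kronR_def qtrans_def qvec_def sum_lessThan_mult_mod_div[symmetric] mult.assoc)
  finally show ?thesis .
qed

theorem mainTheorem6:
  fixes M K L N :: nat and A B C :: qmat
  shows "\<forall>i < M * N.
      qvec M (lmult K A (rmult L B C)) i 0
        = lmult (L * K) (kronR M K (qtrans C) A) (qvec K B) i 0
    \<and> qvec M (rmult K A (lmult L B C)) i 0
        = rmult (L * K) (kronL M K (qtrans C) A) (qvec K B) i 0
    \<and> qvec M (rmult L (lmult K A B) C) i 0
        = lmult (L * K) (kronL M K (qtrans C) A) (qvec K B) i 0
    \<and> qvec M (lmult L (rmult K A B) C) i 0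
        = rmult (L * K) (kronR M K (qtrans C) A) (qvec K B) i 0"
  by (simp add: qvec_lmult_rmult_right qvec_rmult_lmult_right
      qvec_rmult_lmult_left qvec_lmult_rmult_left)

end
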